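(* There is an $\omega$-language that is PPBA-recognizable but not RPBA-recognizable.
   Context: A Parikh automaton of dimension $d$ is $\mathcal{A}=(Q,\Sigma,q_0,\Delta,F,C)$ with finite $Q$, $q_0\in Q$, $F\subseteq Q$, finite $\Delta\subseteq Q\times\Sigma\times\mathbb{N}^d\times Q$ and semi-linear $C\subseteq\mathbb{N}^d$ (a finite union of sets $\{b_0+\sum_{j=1}^\ell b_jz_j\mid z_j\in\mathbb{N}\}$, $b_j\in\mathbb{N}^d$). A run on an infinite word $\alpha$ is $r_1r_2\cdots$ with $r_i=(p_{i-1},\alpha_i,\mathbf{v}_i,p_i)\in\Delta$, $p_0=q_0$, and $\rho(r_1\cdots r_i)=\sum_{k\le i}\mathbf{v}_k$. For an RPBA (reachability Parikh–Büchi automaton) the run is accepting if there is $i\ge1$ with $p_i\in F$ and $\rho(r_1\cdots r_i)\in C$, and there are infinitely many $j$ with $p_j\in F$. For a PPBA (prefix Parikh–Büchi automaton) the run is accepting if there are infinitely many $i\ge1$ with $p_i\in F$ and $\rho(r_1\cdots r_i)\in C$. An $\omega$-language is X-recognizable if it equals the set of infinite words with an accepting run of some automaton of type X. *)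

theory Defs
  imports Main
begin

text \<open>Vectors in N^d are represented as functions nat => nat vanishing from index d on.\<close>
definition vecs :: "nat \<Rightarrow> (nat \<Rightarrow> nat) set" where
  "vecs d = {v. \<forall>i\<ge>d. v i = 0}"

definition linear_set :: "(nat \<Rightarrow> nat) \<Rightarrow> (nat \<Rightarrow> nat) list \<Rightarrow> (nat \<Rightarrow> nat) set" where
  "linear_set b0 B = {(\<lambda>i. b0 i + (\<Sum>j<length B. z j * (B ! j) i)) | z. True}"

definition semilinear :: "nat \<Rightarrow> (nat \<Rightarrow> nat) set \<Rightarrow> bool" where
  "semilinear d C \<longleftrightarrow> (\<exists>S. finite S \<and> (\<forall>(b0, B) \<in> S. b0 \<in> vecs d \<and> set B \<subseteq> vecs d)
      \<and> C = (\<Union>(b0, B) \<in> S. linear_set b0 B))"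

record 'a parikh_aut =
  states :: "nat set"
  alph :: "'a set"
  init :: nat
  trans :: "(nat \<times> 'a \<times> (nat \<Rightarrow> nat) \<times> nat) set"
  final :: "nat set"
  constr :: "(nat \<Rightarrow> nat) set"
  dim :: nat

definition wf_PA :: "'a parikh_aut \<Rightarrow> bool" where
  "wf_PA A \<longleftrightarrow> finite (states A) \<and> finite (alph A) \<and> init A \<in> states A
     \<and> final A \<subseteq> states A \<and> finite (trans A)
     \<and> trans A \<subseteq> states A \<times> alph A \<times> vecs (dim A) \<times> states A
     \<and> semilinear (dim A) (constr A)"

definition t_src :: "nat \<times> 'a \<times> (nat \<Rightarrow> nat) \<times> nat \<Rightarrow> nat" where
  "t_src t = fst t"
definition t_letter :: "nat \<times> 'a \<times> (nat \<Rightarrow> nat) \<times> nat \<Rightarrow> 'a" where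
  "t_letter t = fst (snd t)"
definition t_vec :: "nat \<times> 'a \<times> (nat \<Rightarrow> nat) \<times> nat \<Rightarrow> nat \<Rightarrow> nat" where
  "t_vec t = fst (snd (snd t))"
definition t_tgt :: "nat \<times> 'a \<times> (nat \<Rightarrow> nat) \<times> nat \<Rightarrow> nat" where
  "t_tgt t = snd (snd (snd t))"

text \<open>A run on the infinite word alpha (0-indexed: alpha n is the (n+1)-th letter):
  r n is the (n+1)-th transition r_{n+1}; so p_{n+1} = t_tgt (r n).\<close>
definition is_run :: "'a parikh_aut \<Rightarrow> (nat \<Rightarrow> 'a) \<Rightarrow> (nat \<Rightarrow> nat \<times> 'a \<times> (nat \<Rightarrow> nat) \<times> nat) \<Rightarrow> bool" where
  "is_run A \<alpha> r \<longleftrightarrow> t_src (r 0) = init A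
     \<and> (\<forall>n. r n \<in> trans A \<and> t_letter (r n) = \<alpha> n \<and> t_tgt (r n) = t_src (r (Suc n)))"

definition rho :: "(nat \<Rightarrow> nat \<times> 'a \<times> (nat \<Rightarrow> nat) \<times> nat) \<Rightarrow> nat \<Rightarrow> nat \<Rightarrow> nat" where
  "rho r n = (\<lambda>j. \<Sum>k\<le>n. t_vec (r k) j)"

definition RPBA_accepting :: "'a parikh_aut \<Rightarrow> (nat \<Rightarrow> nat \<times> 'a \<times> (nat \<Rightarrow> nat) \<times> nat) \<Rightarrow> bool" where
  "RPBA_accepting A r \<longleftrightarrow>
     (\<exists>n. t_tgt (r n) \<in> final A \<and> rho r n \<in> constr A)
     \<and> (\<exists>\<^sub>\<infinity>n. t_tgt (r n) \<in> final A)"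

definition PPBA_accepting :: "'a parikh_aut \<Rightarrow> (nat \<Rightarrow> nat \<times> 'a \<times> (nat \<Rightarrow> nat) \<times> nat) \<Rightarrow> bool" where
  "PPBA_accepting A r \<longleftrightarrow> (\<exists>\<^sub>\<infinity>n. t_tgt (r n) \<in> final A \<and> rho r n \<in> constr A)"

definition RPBA_lang :: "'a parikh_aut \<Rightarrow> (nat \<Rightarrow> 'a) set" where
  "RPBA_lang A = {\<alpha>. (\<forall>i. \<alpha> i \<in> alph A) \<and> (\<exists>r. is_run A \<alpha> r \<and> RPBA_accepting A r)}"

definition PPBA_lang :: "'a parikh_aut \<Rightarrow> (nat \<Rightarrow> 'a) set" where
  "PPBA_lang A = {\<alpha>. (\<forall>i. \<alpha> i \<in> alph A) \<and> (\<exists>r. is_run A \<alpha> r \<and> PPBA_accepting A r)}"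

definition RPBA_recognizable :: "'a set \<Rightarrow> (nat \<Rightarrow> 'a) set \<Rightarrow> bool" where
  "RPBA_recognizable \<Sigma> L \<longleftrightarrow> (\<exists>A. wf_PA A \<and> alph A = \<Sigma> \<and> RPBA_lang A = L)"

definition PPBA_recognizable :: "'a set \<Rightarrow> (nat \<Rightarrow> 'a) set \<Rightarrow> bool" where
  "PPBA_recognizable \<Sigma> L \<longleftrightarrow> (\<exists>A. wf_PA A \<and> alph A = \<Sigma> \<and> PPBA_lang A = L)"

end

theory Submission
  imports Defs "HOL-Library.Infinite_Set"
begin

text \<open>The witness is the set of binary words with infinitely many prefixes containing as many
  0s as 1s. A one-state PPBA counting the two letters recognizes it. An RPBA, in contrast,
  consults its counters only once, at some finite position; beyond it, acceptance is a plain
  Buchi condition, so a loop of the run inside a later block of 0s of the word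
  \<open>(0\<^sup>N 1\<^sup>N)\<^sup>\<omega>\<close>, N exceeding the number of states, can be pumped
  without losing acceptance. No prefix of that word has more 1s than 0s, so every prefix of the
  pumped word extending past the loop has strictly more 0s than 1s.\<close>

definition pump :: "nat \<Rightarrow> nat \<Rightarrow> (nat \<Rightarrow> 'b) \<Rightarrow> nat \<Rightarrow> 'b" where
  "pump j d f k = (if k < j then f k else f (k - d))"

lemma sum_pump:
  fixes f :: "nat \<Rightarrow> 'b::comm_monoid_add"
  assumes "d \<le> j" "j \<le> m"
  shows "(\<Sum>k<m. pump j d f k) = (\<Sum>k<m - d. f k) + (\<Sum>k\<in>{j - d..<j}. f k)"
  using assms(2)
proof (induction m rule: nat_induct_at_least)
  case base
  have "(\<Sum>k<j. pump j d f k) = (\<Sum>k<j. f k)"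
    by (simp add: pump_def)
  also have "\<dots> = (\<Sum>k<j - d. f k) + (\<Sum>k\<in>{j - d..<j}. f k)"
    by (simp add: lessThan_atLeast0 sum.atLeastLessThan_concat)
  finally show ?case .
next
  case (Suc m)
  then have "Suc m - d = Suc (m - d)"
    using assms(1) by simp
  with Suc show ?case
    by (simp add: pump_def algebra_simps)
qed

lemma INFM_pump:
  assumes "\<exists>\<^sub>\<infinity>k. P (f k)"
  shows "\<exists>\<^sub>\<infinity>k. P (pump j d f k)"
  unfolding INFM_nat
proof
  fix m
  obtain k where "k > m + j" "P (f k)"
    using assms unfolding INFM_nat by blast
  then have "k + d > m" "P (pump j d f (k + d))"
    by (simp_all add: pump_def)
  then show "\<exists>k>m. P (pump j d f k)"
    by blast
qed

lemma pigeonhole_interval: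
  assumes "finite S" "\<And>k. f k \<in> S"
  obtains i j where "s \<le> i" "i < j" "j \<le> s + card S" "f i = f j"
proof -
  have "card (f ` {s..s + card S}) < card {s..s + card S}"
    using card_mono[OF assms(1)] assms(2) by (simp add: image_subset_iff le_imp_less_Suc)
  then have "\<not> inj_on f {s..s + card S}"
    by (rule pigeonhole)
  then obtain x y where "x \<in> {s..s + card S}" "y \<in> {s..s + card S}" "x \<noteq> y" "f x = f y"
    unfolding inj_on_def by blast
  then show ?thesis
    using that by (cases x y rule: linorder_cases) auto
qed

lemma run_src_in_states:
  assumes "wf_PA A" "is_run A \<alpha> r"
  shows "t_src (r k) \<in> states A"
proof -
  have "r k \<in> states A \<times> alph A \<times> vecs (dim A) \<times> states A"
    using assms unfolding wf_PA_def is_run_def by blast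
  then show ?thesis
    by (simp add: t_src_def mem_Times_iff)
qed

lemma is_run_pump:
  assumes run: "is_run A \<alpha> r" and "d \<le> j" and loop: "t_src (r (j - d)) = t_src (r j)"
  shows "is_run A (pump j d \<alpha>) (pump j d r)"
  unfolding is_run_def
proof (intro conjI allI)
  fix k
  show "pump j d r k \<in> trans A" "t_letter (pump j d r k) = pump j d \<alpha> k"
    using run by (simp_all add: pump_def is_run_def)
  consider "Suc k < j" | "Suc k = j" | "j \<le> k"
    by linarith
  then show "t_tgt (pump j d r k) = t_src (pump j d r (Suc k))"
  proof cases
    case 2
    then show ?thesis
      using run loop \<open>d \<le> j\<close> by (auto simp: pump_def is_run_def)
  next
    case 3
    then have "Suc k - d = Suc (k - d)"
      using \<open>d \<le> j\<close> by simp
    with 3 show ?thesis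
      using run by (simp add: pump_def is_run_def)
  qed (use run in \<open>simp add: pump_def is_run_def\<close>)
qed (use run in \<open>simp add: pump_def is_run_def\<close>)

lemma rho_pump: "n < j \<Longrightarrow> rho (pump j d r) n = rho r n"
  by (auto simp: rho_def pump_def intro!: ext sum.cong)

lemma RPBA_accepting_pump:
  assumes "t_tgt (r n) \<in> final A" "rho r n \<in> constr A" "n < j"
    and "\<exists>\<^sub>\<infinity>k. t_tgt (r k) \<in> final A"
  shows "RPBA_accepting A (pump j d r)"
  unfolding RPBA_accepting_def
proof
  show "\<exists>n. t_tgt (pump j d r n) \<in> final A \<and> rho (pump j d r) n \<in> constr A"
  proof (intro exI conjI)
    show "rho (pump j d r) n \<in> constr A"
      using assms(2,3) rho_pump[of n j d r] by simp
    show "t_tgt (pump j d r n) \<in> final A"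
      using assms(1,3) by (simp add: pump_def)
  qed
  show "\<exists>\<^sub>\<infinity>k. t_tgt (pump j d r k) \<in> final A"
    using assms(4) by (rule INFM_pump)
qed

lemma RPBA_lang_pumping:
  assumes wf: "wf_PA A" and "\<alpha> \<in> RPBA_lang A"
  obtains n where "\<And>s. n \<le> s \<Longrightarrow> \<exists>i j. s \<le> i \<and> i < j \<and> j \<le> s + card (states A)
    \<and> pump j (j - i) \<alpha> \<in> RPBA_lang A"
proof -
  obtain r n where letters: "\<forall>k. \<alpha> k \<in> alph A" and run: "is_run A \<alpha> r"
    and reach: "t_tgt (r n) \<in> final A" "rho r n \<in> constr A"
    and buchi: "\<exists>\<^sub>\<infinity>k. t_tgt (r k) \<in> final A"
    using \<open>\<alpha> \<in> RPBA_lang A\<close> unfolding RPBA_lang_def RPBA_accepting_def by blast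
  have "\<exists>i j. s \<le> i \<and> i < j \<and> j \<le> s + card (states A) \<and> pump j (j - i) \<alpha> \<in> RPBA_lang A"
    if "n \<le> s" for s
  proof -
    obtain i j where ij: "s \<le> i" "i < j" "j \<le> s + card (states A)" "t_src (r i) = t_src (r j)"
      using pigeonhole_interval[of "states A" "\<lambda>k. t_src (r k)"] wf run_src_in_states[OF wf run]
      by (auto simp: wf_PA_def)
    have "is_run A (pump j (j - i) \<alpha>) (pump j (j - i) r)"
      using ij by (intro is_run_pump[OF run]) simp_all
    moreover have "RPBA_accepting A (pump j (j - i) r)"
      using ij \<open>n \<le> s\<close> by (intro RPBA_accepting_pump[OF reach _ buchi]) simp
    moreover have "\<forall>k. pump j (j - i) \<alpha> k \<in> alph A"
      using letters by (simp add: pump_def)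
    ultimately show ?thesis
      using ij unfolding RPBA_lang_def by blast
  qed
  then show ?thesis
    using that by blast
qed

definition excess :: "(nat \<Rightarrow> nat) \<Rightarrow> nat \<Rightarrow> int" where
  "excess w n = (\<Sum>k<n. if w k = 0 then 1 else -1)"

definition balanced_words :: "(nat \<Rightarrow> nat) set" where
  "balanced_words = {\<alpha>. (\<forall>k. \<alpha> k \<in> {0, 1}) \<and> (\<exists>\<^sub>\<infinity>n. excess \<alpha> n = 0)}"

definition block_word :: "nat \<Rightarrow> nat \<Rightarrow> nat" where
  "block_word N k = (if k mod (2 * N) < N then 0 else 1)"

lemma block_word_eq_0:
  assumes "2 * N * q \<le> k" "k < 2 * N * q + N"
  shows "block_word N k = 0"
proof -
  have "k = (k - 2 * N * q) + q * (2 * N)"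
    using assms(1) by simp
  then have "k mod (2 * N) = (k - 2 * N * q) mod (2 * N)"
    by (metis mod_mult_self1)
  moreover have "k - 2 * N * q < N"
    using assms by linarith
  ultimately show ?thesis
    by (simp add: block_word_def)
qed

lemma excess_Suc: "excess w (Suc n) = excess w n + (if w n = 0 then 1 else -1)"
  by (simp add: excess_def)

lemma excess_block_word:
  assumes "N > 0"
  shows "excess (block_word N) n = int (min (n mod (2 * N)) (2 * N - n mod (2 * N)))"
proof (induction n)
  case (Suc n)
  have "n mod (2 * N) < 2 * N"
    using assms by simp
  then show ?case
    unfolding excess_Suc Suc.IH by (auto simp: mod_Suc block_word_def of_nat_diff)
qed (simp add: excess_def)

lemma block_word_in_balanced_words:
  assumes "N > 0"
  shows "block_word N \<in> balanced_words"
  unfolding balanced_words_def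
proof (intro CollectI conjI allI)
  show "block_word N k \<in> {0, 1}" for k
    by (simp add: block_word_def)
  have "excess (block_word N) (2 * N * m) = 0" for m
    using assms by (simp add: excess_block_word)
  moreover have "m \<le> 2 * N * m" for m
    using assms by simp
  ultimately show "\<exists>\<^sub>\<infinity>n. excess (block_word N) n = 0"
    unfolding INFM_nat_le by blast
qed

lemma excess_pump_zero_segment:
  assumes "d \<le> j" "j \<le> m" and zeros: "\<forall>k\<in>{j - d..<j}. w k = 0"
  shows "excess (pump j d w) m = excess w (m - d) + int d"
proof -
  have "excess (pump j d w) m = (\<Sum>k<m. pump j d (\<lambda>k. if w k = 0 then 1 else -1) k)"
    unfolding excess_def pump_def by (rule sum.cong) auto
  also have "\<dots> = excess w (m - d) + (\<Sum>k\<in>{j - d..<j}. if w k = 0 then 1 else -1)"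
    unfolding excess_def by (rule sum_pump[OF assms(1,2)])
  also have "(\<Sum>k\<in>{j - d..<j}. if w k = 0 then 1 else -1 :: int) = int d"
    using zeros assms(1) by simp
  finally show ?thesis .
qed

lemma pump_zero_segment_not_balanced:
  assumes "0 < d" "d \<le> j" "\<forall>k\<in>{j - d..<j}. w k = 0" "\<forall>n. excess w n \<ge> 0"
  shows "\<not> (\<exists>\<^sub>\<infinity>m. excess (pump j d w) m = 0)"
proof -
  have "excess (pump j d w) m > 0" if "j \<le> m" for m
    using excess_pump_zero_segment[OF assms(2) that assms(3)] assms(1,4)
    by (metis add_nonneg_pos of_nat_0_less_iff)
  then show ?thesis
    unfolding not_INFM MOST_nat_le by (metis less_irrefl)
qed

lemma balanced_words_not_RPBA_recognizable: "\<not> RPBA_recognizable {0, 1} balanced_words"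
proof
  assume "RPBA_recognizable {0, 1} balanced_words"
  then obtain A :: "nat parikh_aut" where wf: "wf_PA A" and lang: "RPBA_lang A = balanced_words"
    unfolding RPBA_recognizable_def by blast
  define N where "N = card (states A) + 1"
  then have "N > 0"
    by simp
  then obtain n where pumping: "\<And>s. n \<le> s \<Longrightarrow> \<exists>i j. s \<le> i \<and> i < j \<and> j \<le> s + card (states A)
      \<and> pump j (j - i) (block_word N) \<in> balanced_words"
    using RPBA_lang_pumping[OF wf] block_word_in_balanced_words lang by metis
  obtain i j where ij: "2 * N * n \<le> i" "i < j" "j < 2 * N * n + N"
    and pumped: "pump j (j - i) (block_word N) \<in> balanced_words"
    using pumping[of "2 * N * n"] \<open>N > 0\<close> N_def by fastforce
  have "block_word N k = 0" if "k \<in> {i..<j}" for k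
    using that ij by (intro block_word_eq_0[of N n]) auto
  moreover have "\<forall>m. excess (block_word N) m \<ge> 0"
    using excess_block_word[OF \<open>N > 0\<close>] by simp
  ultimately have "\<not> (\<exists>\<^sub>\<infinity>m. excess (pump j (j - i) (block_word N)) m = 0)"
    using ij by (intro pump_zero_segment_not_balanced) auto
  with pumped show False
    unfolding balanced_words_def by blast
qed

definition unit_vec :: "nat \<Rightarrow> nat \<Rightarrow> nat" where
  "unit_vec a i = (if i = a then 1 else 0)"

definition counting_aut :: "nat parikh_aut" where
  "counting_aut = \<lparr>states = {0}, alph = {0, 1}, init = 0,
     trans = {(0, a, unit_vec a, 0) | a. a \<in> {0, 1}}, final = {0},
     constr = linear_set (\<lambda>_. 0) [\<lambda>i. if i < 2 then 1 else 0], dim = 2\<rparr>"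

definition letter_run :: "(nat \<Rightarrow> nat) \<Rightarrow> nat \<Rightarrow> nat \<times> nat \<times> (nat \<Rightarrow> nat) \<times> nat" where
  "letter_run \<alpha> k = (0, \<alpha> k, unit_vec (\<alpha> k), 0)"

lemma semilinear_linear_set:
  assumes "b0 \<in> vecs d" "set B \<subseteq> vecs d"
  shows "semilinear d (linear_set b0 B)"
  unfolding semilinear_def using assms by (intro exI[of _ "{(b0, B)}"]) auto

lemma wf_counting_aut: "wf_PA counting_aut"
  unfolding wf_PA_def counting_aut_def
  by (auto simp: vecs_def unit_vec_def intro!: semilinear_linear_set)

lemma linear_set_single_period: "linear_set (\<lambda>_. 0) [b] = range (\<lambda>z i. z * b i)"
  by (auto simp: linear_set_def)

lemma mem_constr_counting_aut: "v \<in> constr counting_aut \<longleftrightarrow> v 0 = v 1 \<and> (\<forall>i\<ge>2. v i = 0)"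
proof
  assume "v 0 = v 1 \<and> (\<forall>i\<ge>2. v i = 0)"
  then have "v = (\<lambda>i. v 0 * (if i < 2 then 1 else 0))"
    by (auto simp: less_2_cases_iff)
  then show "v \<in> constr counting_aut"
    unfolding counting_aut_def linear_set_single_period by (simp add: image_iff) blast
qed (auto simp: counting_aut_def linear_set_single_period)

lemma is_run_counting_aut_iff:
  "is_run counting_aut \<alpha> r \<longleftrightarrow> (\<forall>k. \<alpha> k \<in> {0, 1}) \<and> r = letter_run \<alpha>"
proof
  assume run: "is_run counting_aut \<alpha> r"
  have "\<alpha> k \<in> {0, 1} \<and> r k = letter_run \<alpha> k" for k
  proof -
    have "r k \<in> trans counting_aut" "t_letter (r k) = \<alpha> k"
      using run by (simp_all add: is_run_def)
    then show ?thesis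
      by (auto simp: counting_aut_def t_letter_def letter_run_def)
  qed
  then show "(\<forall>k. \<alpha> k \<in> {0, 1}) \<and> r = letter_run \<alpha>"
    by auto
qed (auto simp: is_run_def counting_aut_def letter_run_def t_src_def t_tgt_def t_letter_def)

lemma rho_letter_run: "rho (letter_run \<alpha>) n = (\<lambda>a. \<Sum>k\<le>n. if \<alpha> k = a then 1 else 0)"
  by (auto simp: rho_def letter_run_def t_vec_def unit_vec_def intro!: ext sum.cong)

lemma excess_Suc_binary:
  assumes "\<forall>k. \<alpha> k \<in> {0, 1}"
  shows "excess \<alpha> (Suc n)
    = int (\<Sum>k\<le>n. if \<alpha> k = 0 then 1 else 0) - int (\<Sum>k\<le>n. if \<alpha> k = 1 then 1 else 0)"
  unfolding excess_def lessThan_Suc_atMost of_nat_sum sum_subtractf[symmetric]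
  using assms by (intro sum.cong) auto

lemma rho_letter_run_in_constr_iff:
  assumes "\<forall>k. \<alpha> k \<in> {0, 1}"
  shows "rho (letter_run \<alpha>) n \<in> constr counting_aut \<longleftrightarrow> excess \<alpha> (Suc n) = 0"
proof -
  have "(\<Sum>k\<le>n. if \<alpha> k = i then 1 else 0) = (0::nat)" if "i \<ge> 2" for i
  proof -
    have "\<alpha> k \<noteq> i" for k
      using assms[rule_format, of k] that by auto
    then show ?thesis
      by simp
  qed
  then show ?thesis
    unfolding mem_constr_counting_aut rho_letter_run excess_Suc_binary[OF assms]
    by (auto simp del: of_nat_sum)
qed

lemma INFM_Suc_iff: "(\<exists>\<^sub>\<infinity>n. P (Suc n)) \<longleftrightarrow> (\<exists>\<^sub>\<infinity>n. P n)"
proof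
  show "\<exists>\<^sub>\<infinity>n. P n" if "\<exists>\<^sub>\<infinity>n. P (Suc n)"
    using that inj_Suc by (rule INFM_inj)
  show "\<exists>\<^sub>\<infinity>n. P (Suc n)" if "\<exists>\<^sub>\<infinity>n. P n"
    unfolding INFM_nat
  proof
    fix m
    obtain n where "n > Suc m" "P n"
      using \<open>\<exists>\<^sub>\<infinity>n. P n\<close> unfolding INFM_nat by blast
    then have "n - 1 > m" "P (Suc (n - 1))"
      by simp_all
    then show "\<exists>n>m. P (Suc n)"
      by blast
  qed
qed

lemma PPBA_lang_counting_aut: "PPBA_lang counting_aut = balanced_words"
proof -
  have alph: "alph counting_aut = {0, 1}"
    by (simp add: counting_aut_def)
  have "\<alpha> \<in> PPBA_lang counting_aut \<longleftrightarrow> \<alpha> \<in> balanced_words" for \<alpha>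
  proof (cases "\<forall>k. \<alpha> k \<in> {0, 1}")
    case True
    have "t_tgt (letter_run \<alpha> n) \<in> final counting_aut" for n
      by (simp add: letter_run_def t_tgt_def counting_aut_def)
    then have "PPBA_accepting counting_aut (letter_run \<alpha>) \<longleftrightarrow> (\<exists>\<^sub>\<infinity>n. excess \<alpha> (Suc n) = 0)"
      unfolding PPBA_accepting_def rho_letter_run_in_constr_iff[OF True] by simp
    with True show ?thesis
      unfolding PPBA_lang_def balanced_words_def is_run_counting_aut_iff
      by (simp add: alph INFM_Suc_iff[of "\<lambda>n. excess \<alpha> n = 0"])
  next
    case False
    then show ?thesis
      unfolding PPBA_lang_def balanced_words_def alph by blast
  qed
  then show ?thesis
    by blast
qed

theorem lemma3:
  shows "\<exists>(\<Sigma>::nat set) L. finite \<Sigma> \<and> L \<subseteq> {\<alpha>. \<forall>i. \<alpha> i \<in> \<Sigma>}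
           \<and> PPBA_recognizable \<Sigma> L \<and> \<not> RPBA_recognizable \<Sigma> L"
proof (intro exI conjI)
  show "finite {0, 1 :: nat}"
    by simp
  show "balanced_words \<subseteq> {\<alpha>. \<forall>i. \<alpha> i \<in> {0, 1}}"
    by (auto simp: balanced_words_def)
  show "PPBA_recognizable {0, 1} balanced_words"
    unfolding PPBA_recognizable_def using wf_counting_aut PPBA_lang_counting_aut
    by (intro exI[of _ counting_aut]) (simp add: counting_aut_def)
  show "\<not> RPBA_recognizable {0, 1} balanced_words"
    by (rule balanced_words_not_RPBA_recognizable)
qed

end
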